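(* Consider the finite-sum problem $\min_{\theta\in\mathbb{R}^n}\Psi(\theta)=\frac1N\sum_{i=1}^N\psi_i(\theta)$ and the following stochastic method (S2QN). Fix constants $0<r_1<r_2$, a positive sequence $\{\alpha_k\}$, and step sizes $\beta_k\equiv 1$. At iteration $k$, random index sets $\mathcal S_g^k\subseteq\{1,\dots,N\}$ are chosen, $g_k=\nabla_{\mathcal S_g^k}\Psi(\theta_k):=\frac{1}{|\mathcal S_g^k|}\sum_{i\in\mathcal S_g^k}\nabla\psi_i(\theta_k)$, a symmetric matrix $B_k=H_k+\Lambda_k$ is formed (base matrix $H_k$ plus quasi-Newton refinement matrix $\Lambda_k$), the regularization parameter is $$\lambda_k=\begin{cases}\frac{2r_1}{\|g_{k-1}\|+r_1}\alpha_k^{-1}, & \|g_{k-1}\|<r_1,\\ \frac{2\|g_{k-1}\|}{\|g_{k-1}\|+r_2}\alpha_k^{-1}, & \|g_{k-1}\|>r_2,\\ \alpha_k^{-1}, &\text{otherwise},\end{cases}$$ and $\theta_{k+1}=\theta_k+\beta_k d_k$ with $d_k=-(B_k+\lambda_kI)^{-1}g_k$. Let $\{\mathcal F_k\}$ be a filtration with $\theta_k$ being $\mathcal F_{k-1}$-measurable. Assume: (i) $\Psi$ is continuously differentiable on $\mathbb{R}^n$, bounded below by $\Psi_{\inf}$, and $\nabla\Psi$ is Lipschitz continuous on $\mathbb{R}^n$ with constant $L_\Psi\ge 1$; (ii) for every $k$, $B_k$ and $\nabla_{\mathcal S_g^k}\Psi(\theta_k)$ are conditionally independent given $\mathcal F_{k-1}$,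 and almost surely $\mathbb{E}[\nabla_{\mathcal S_g^k}\Psi(\theta_k)\mid\mathcal F_{k-1}]=\nabla\Psi(\theta_k)$; (iii) almost surely $\mathbb{E}[\|\nabla_{\mathcal S_g^k}\Psi(\theta_k)-\nabla\Psi(\theta_k)\|^2\mid\mathcal F_{k-1}]\le\sigma_k^2$; (iv) there is $h>0$ with $0\preceq B_k\preceq hI$ for all $k$. If $\alpha_k\le\frac{r_1}{4r_2(L_\Psi+h)}$ for all $k$, $\sum_k\alpha_k=\infty$ and $\sum_k\alpha_k\sigma_k^2<\infty$, then almost surely $\lim_{k\to\infty}\nabla\Psi(\theta_k)=0$.
   Context: $\psi_i:\mathbb{R}^n\to\mathbb{R}$ are component functions. The base matrix $H_k$ represents partial Hessian information (e.g. a subsampled Hessian or a Gauss–Newton/Fisher approximation) and $\Lambda_k$ is a quasi-Newton matrix built from previous iterates; the theorem only uses the properties (ii) and (iv) of $B_k=H_k+\Lambda_k$. $g_{k-1}$ denotes the stochastic gradient used at the previous iteration. *)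

theory Defs
  imports "HOL-Analysis.Analysis" "HOL-Probability.Probability"
begin

definition s2qn_lambda :: "real \<Rightarrow> real \<Rightarrow> real \<Rightarrow> real \<Rightarrow> real" where
  "s2qn_lambda r1 r2 a v =
     (if v < r1 then (2 * r1 / (v + r1)) / a
      else if v > r2 then (2 * v / (v + r2)) / a
      else 1 / a)"

definition loewner_le :: "real^'n^'n \<Rightarrow> real^'n^'n \<Rightarrow> bool" where
  "loewner_le A B \<longleftrightarrow> (\<forall>x. x \<bullet> (A *v x) \<le> x \<bullet> (B *v x))"

definition cond_indep ::
  "'w measure \<Rightarrow> 'w measure \<Rightarrow> ('w \<Rightarrow> 'a::topological_space) \<Rightarrow> ('w \<Rightarrow> 'b::topological_space) \<Rightarrow> bool" where
  "cond_indep M F X Y \<longleftrightarrow>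
     (\<forall>A \<in> sets borel. \<forall>C \<in> sets borel.
        AE w in M. real_cond_exp M F (indicator (X -` A \<inter> Y -` C \<inter> space M)) w
                   = real_cond_exp M F (indicator (X -` A \<inter> space M)) w
                     * real_cond_exp M F (indicator (Y -` C \<inter> space M)) w)"

end

theory Submission
  imports Defs
begin

(* Since lambda_k lies in [1/alpha_k, 2/alpha_k] and 0 <= B_k <= h I, the step matrix
   P_k = (B_k + lambda_k I)^-1 satisfies v . P_k v >= (8/25) alpha_k |v|^2 and
   |P_k v| <= alpha_k |v|.  With e_k = g_k - grad Psi(theta_k), the descent lemma for the
   L-smooth Psi and Young's inequality give
     Psi(theta_(k+1)) <= Psi(theta_k) - (3/100) alpha_k |grad Psi(theta_k)|^2 + 7 alpha_k |e_k|^2.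
   The conditional variance bound makes sum_k alpha_k E|e_k|^2 finite, hence
   sum_k alpha_k |e_k|^2 < oo almost surely, and the rest of the argument is pathwise:
   Psi being bounded below gives sum_k alpha_k |grad Psi(theta_k)|^2 < oo, the Lipschitz bound
   |grad Psi(theta_(k+1))| <= |grad Psi(theta_k)| + L alpha_k (|grad Psi(theta_k)| + |e_k|)
   makes |grad Psi(theta_k)|^2 convergent, and sum_k alpha_k = oo forces the limit to be 0. *)

lemma mat_matrix_vector_mult: "(mat c :: real^'n^'n) *v x = c *\<^sub>R x"
  by (vector matrix_vector_mult_def mat_def) (simp add: if_distrib if_distribR cong del: if_weak_cong)

lemma loewner_le_0_iff: "loewner_le 0 B \<longleftrightarrow> (\<forall>x. 0 \<le> x \<bullet> (B *v x))"
  by (simp add: loewner_le_def)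

lemma loewner_le_mat_iff: "loewner_le B (mat h) \<longleftrightarrow> (\<forall>x. x \<bullet> (B *v x) \<le> h * (x \<bullet> x))"
  by (simp add: loewner_le_def mat_matrix_vector_mult)

lemma matrix_inv_right: "invertible A \<Longrightarrow> A ** matrix_inv A = mat 1"
  unfolding invertible_def matrix_inv_def by (rule someI_ex[THEN conjunct1])

lemma symmetric_inner_matrix_vector_mult:
  "transpose B = (B::real^'n^'n) \<Longrightarrow> x \<bullet> (B *v y) = (B *v x) \<bullet> y"
  by (metis dot_lmul_matrix vector_transpose_matrix)

lemma psd_Cauchy_Schwarz:
  fixes B :: "real^'n^'n"
  assumes sym: "transpose B = B" and psd: "loewner_le 0 B"
  shows "(x \<bullet> (B *v y))\<^sup>2 \<le> (x \<bullet> (B *v x)) * (y \<bullet> (B *v y))"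
proof -
  let ?p = "x \<bullet> (B *v x)" and ?q = "x \<bullet> (B *v y)" and ?r = "y \<bullet> (B *v y)"
  have quad: "0 \<le> ?p + 2 * t * ?q + t\<^sup>2 * ?r" for t
  proof -
    have "0 \<le> (x + t *\<^sub>R y) \<bullet> (B *v (x + t *\<^sub>R y))"
      using psd by (simp add: loewner_le_0_iff)
    also have "\<dots> = ?p + 2 * t * ?q + t\<^sup>2 * ?r"
      using symmetric_inner_matrix_vector_mult[OF sym, of y x]
      by (simp add: matrix_vector_right_distrib matrix_vector_mult_scaleR inner_add_left
          inner_add_right power2_eq_square algebra_simps inner_commute)
    finally show ?thesis .
  qed
  show ?thesis
  proof (cases "?r = 0")
    case True
    have "?q = 0"
    proof (rule ccontr)
      assume "?q \<noteq> 0"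
      then show False
        using quad[of "- (?p + 1) / (2 * ?q)"] True by (simp add: field_simps)
    qed
    then show ?thesis using True by simp
  next
    case False
    moreover have "0 \<le> ?r" using psd by (simp add: loewner_le_0_iff)
    ultimately have "?r > 0" by simp
    have "0 \<le> ?p + 2 * (- ?q / ?r) * ?q + (- ?q / ?r)\<^sup>2 * ?r" by (rule quad)
    also have "\<dots> = ?p - ?q\<^sup>2 / ?r" using \<open>?r > 0\<close> by (simp add: field_simps power2_eq_square)
    finally show ?thesis using \<open>?r > 0\<close> by (simp add: field_simps)
  qed
qed

lemma psd_matrix_vector_norm_le:
  fixes B :: "real^'n^'n"
  assumes sym: "transpose B = B" and psd: "loewner_le 0 B" and ub: "loewner_le B (mat h)"
  shows "norm (B *v u) \<le> h * norm u"
proof -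
  let ?b = "B *v u"
  have lb: "0 \<le> x \<bullet> (B *v x)" and ub: "x \<bullet> (B *v x) \<le> h * (x \<bullet> x)" for x
    using psd ub by (simp_all add: loewner_le_0_iff loewner_le_mat_iff)
  have h: "0 \<le> h"
    using order.trans[OF lb ub, of "axis undefined 1"] by (simp add: inner_axis_axis)
  have "(norm ?b)\<^sup>2 * (norm ?b)\<^sup>2 = (?b \<bullet> (B *v u))\<^sup>2"
    by (metis dot_square_norm power2_eq_square)
  also have "\<dots> \<le> (?b \<bullet> (B *v ?b)) * (u \<bullet> (B *v u))"
    by (rule psd_Cauchy_Schwarz[OF sym psd])
  also have "\<dots> \<le> (h * (?b \<bullet> ?b)) * (h * (u \<bullet> u))"
    by (rule mult_mono[OF ub ub mult_nonneg_nonneg[OF h inner_ge_zero] lb])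
  also have "\<dots> = (h * norm u)\<^sup>2 * (norm ?b)\<^sup>2"
    by (simp add: dot_square_norm power_mult_distrib power2_eq_square)
  finally have "(norm ?b)\<^sup>2 * (norm ?b)\<^sup>2 \<le> (h * norm u)\<^sup>2 * (norm ?b)\<^sup>2" .
  from mult_right_le_imp_le[OF this] have "(norm ?b)\<^sup>2 \<le> (h * norm u)\<^sup>2"
    by (cases "?b = 0") simp_all
  then show ?thesis using h by (simp add: power2_le_iff_abs_le)
qed

lemma psd_add_mat_inner_ge:
  fixes B :: "real^'n^'n"
  assumes "loewner_le 0 B"
  shows "lam * (u \<bullet> u) \<le> u \<bullet> ((B + mat lam) *v u)"
  using assms
  by (simp add: loewner_le_0_iff matrix_vector_mult_add_rdistrib mat_matrix_vector_mult inner_add_right)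

lemma psd_add_mat_norm_le:
  fixes B :: "real^'n^'n"
  assumes "transpose B = B" "loewner_le 0 B" "loewner_le B (mat h)" and lam: "0 \<le> lam"
  shows "norm ((B + mat lam) *v u) \<le> (h + lam) * norm u"
proof -
  have "norm ((B + mat lam) *v u) \<le> norm (B *v u) + lam * norm u"
    using norm_triangle_ineq[of "B *v u" "lam *\<^sub>R u"] lam
    by (simp add: matrix_vector_mult_add_rdistrib mat_matrix_vector_mult)
  also have "\<dots> \<le> (h + lam) * norm u"
    using psd_matrix_vector_norm_le[OF assms(1-3)] by (simp add: algebra_simps)
  finally show ?thesis .
qed

lemma invertible_psd_add_mat:
  fixes B :: "real^'n^'n"
  assumes psd: "loewner_le 0 B" and lam: "0 < lam"
  shows "invertible (B + mat lam)"
proof -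
  have "inj ((*v) (B + mat lam))"
    unfolding linear_injective_0[OF matrix_vector_mul_linear]
  proof (intro allI impI)
    fix z assume "(B + mat lam) *v z = 0"
    then have "lam * (z \<bullet> z) \<le> 0" using psd_add_mat_inner_ge[OF psd, of lam z] by simp
    then show "z = 0" using lam by (metis inner_gt_zero_iff mult_pos_pos not_le)
  qed
  then show ?thesis
    by (metis invertible_left_inverse matrix_left_invertible_injective)
qed

lemma regularized_inverse_bounds:
  fixes B :: "real^'n^'n"
  assumes sym: "transpose B = B" and psd: "loewner_le 0 B" and ub: "loewner_le B (mat h)"
    and a: "0 < a" and lam_lb: "1 / a \<le> lam" and lam_ub: "lam \<le> 2 / a" and ah: "a * h \<le> 1/4"
  shows "(8/25) * a * (v \<bullet> v) \<le> v \<bullet> (matrix_inv (B + mat lam) *v v)"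
    and "norm (matrix_inv (B + mat lam) *v v) \<le> a * norm v"
proof -
  have lam: "0 < lam" using a lam_lb by (smt (verit) divide_pos_pos)
  define u where "u = matrix_inv (B + mat lam) *v v"
  have v: "v = (B + mat lam) *v u"
    using matrix_inv_right[OF invertible_psd_add_mat[OF psd lam]]
    by (simp add: u_def matrix_vector_mul_assoc)
  have coercive: "lam * (norm u)\<^sup>2 \<le> v \<bullet> u"
    using psd_add_mat_inner_ge[OF psd, of lam u] v by (simp add: power2_norm_eq_inner inner_commute)
  have v_le: "norm v \<le> (h + lam) * norm u"
    using psd_add_mat_norm_le[OF sym psd ub less_imp_le[OF lam]] v by simp
  have "(lam * norm u) * norm u \<le> norm v * norm u"
    using coercive Cauchy_Schwarz_ineq2[of v u] by (simp add: power2_eq_square mult.assoc)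
  then have "lam * norm u \<le> norm v"
    by (cases "u = 0") (auto elim!: mult_right_le_imp_le)
  then have "norm u \<le> (1 / lam) * norm v"
    using lam by (simp add: field_simps)
  also have "\<dots> \<le> a * norm v"
    using lam_lb a lam by (intro mult_right_mono) (auto simp: field_simps)
  finally show "norm (matrix_inv (B + mat lam) *v v) \<le> a * norm v"
    by (simp add: u_def)
  \<comment> \<open>\<open>a h \<le> 1/4 \<le> a lam / 4\<close> gives \<open>h + lam \<le> 5 lam / 4\<close>,
    and \<open>(8/25) a (5 lam / 4)\<^sup>2 = a lam\<^sup>2 / 2 \<le> lam\<close>\<close>
  have "1 \<le> a * lam"
    using lam_lb a by (simp add: field_simps)
  then have "a * (4 * h) \<le> a * lam"
    using ah by linarith
  then have "h + lam \<le> (5/4) * lam"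
    using a by (simp add: mult_le_cancel_left_pos)
  have "v \<bullet> v \<le> ((h + lam) * norm u)\<^sup>2"
    using v_le by (simp add: dot_square_norm power_mono)
  also have "\<dots> \<le> ((5/4) * lam * norm u)\<^sup>2"
    using order_trans[OF norm_ge_zero v_le] \<open>h + lam \<le> _\<close>
    by (intro power_mono mult_right_mono) auto
  finally have "(8/25) * a * (v \<bullet> v) \<le> (8/25) * a * ((5/4) * lam * norm u)\<^sup>2"
    using a by simp
  also have "\<dots> = (a * lam / 2) * (lam * (norm u)\<^sup>2)"
    by (simp add: power2_eq_square)
  also have "\<dots> \<le> lam * (norm u)\<^sup>2"
    using lam_ub a lam by (intro mult_left_le_one_le) (auto simp: field_simps)
  finally show "(8/25) * a * (v \<bullet> v) \<le> v \<bullet> (matrix_inv (B + mat lam) *v v)"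
    using coercive by (simp add: u_def)
qed

lemma Lipschitz_gradient_descent_lemma:
  fixes f :: "'a::real_inner \<Rightarrow> real"
  assumes deriv: "\<And>x. (f has_derivative (\<lambda>d. G x \<bullet> d)) (at x)"
    and lip: "\<And>x y. norm (G x - G y) \<le> L * norm (x - y)"
  shows "f (x + d) \<le> f x + G x \<bullet> d + L / 2 * (norm d)\<^sup>2"
proof -
  define phi where "phi t = f (x + t *\<^sub>R d) - t * (G x \<bullet> d) - L / 2 * t\<^sup>2 * (norm d)\<^sup>2" for t
  have phi_deriv: "(phi has_real_derivative (G (x + t *\<^sub>R d) - G x) \<bullet> d - L * t * (norm d)\<^sup>2) (at t)"
    for t
  proof -
    have "((\<lambda>t. f (x + t *\<^sub>R d)) has_derivative (\<lambda>s. G (x + t *\<^sub>R d) \<bullet> (s *\<^sub>R d))) (at t)"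
      by (rule has_derivative_compose[OF _ deriv]) (auto intro!: derivative_eq_intros)
    then have "((\<lambda>t. f (x + t *\<^sub>R d)) has_real_derivative G (x + t *\<^sub>R d) \<bullet> d) (at t)"
      by (rule has_derivative_imp_has_field_derivative) simp
    then show ?thesis
      unfolding phi_def by (auto intro!: derivative_eq_intros simp: inner_diff_left)
  qed
  have "phi 1 \<le> phi 0"
  proof (rule DERIV_nonpos_imp_nonincreasing[of 0 1 phi])
    fix t :: real assume t: "0 \<le> t" "t \<le> 1"
    have "(G (x + t *\<^sub>R d) - G x) \<bullet> d \<le> norm (G (x + t *\<^sub>R d) - G x) * norm d"
      by (rule norm_cauchy_schwarz)
    also have "\<dots> \<le> L * norm (t *\<^sub>R d) * norm d"
      using lip[of "x + t *\<^sub>R d" x] by (intro mult_right_mono) auto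
    also have "\<dots> = L * t * (norm d)\<^sup>2" using t by (simp add: power2_eq_square)
    finally have "(G (x + t *\<^sub>R d) - G x) \<bullet> d - L * t * (norm d)\<^sup>2 \<le> 0" by simp
    with phi_deriv show "\<exists>y. (phi has_real_derivative y) (at t) \<and> y \<le> 0" by blast
  qed simp
  then show ?thesis unfolding phi_def by simp
qed

lemma bounded_map_norm_le_split:
  assumes P_bounded: "\<And>v. norm (P v) \<le> a * norm v" and a: "0 \<le> a"
  shows "norm (P g) \<le> a * (norm y + norm (g - y))"
proof -
  have "norm g \<le> norm y + norm (g - y)"
    using norm_triangle_ineq[of y "g - y"] by simp
  then show ?thesis
    using P_bounded[of g] a by (meson mult_left_mono order_trans)
qed

lemma preconditioned_step_gradient_le:
  fixes G :: "'a::real_normed_vector \<Rightarrow> 'a"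
  assumes lip: "\<And>x y. norm (G x - G y) \<le> L * norm (x - y)" and L: "0 \<le> L" and a: "0 \<le> a"
    and P_bounded: "\<And>v. norm (P v) \<le> a * norm v"
  shows "norm (G (x - P g)) \<le> norm (G x) + L * a * (norm (G x) + norm (g - G x))"
proof -
  have "norm (G (x - P g)) \<le> norm (G x) + L * norm (P g)"
    using lip[of "x - P g" x] norm_triangle_sub[of "G (x - P g)" "G x"] by simp
  also have "\<dots> \<le> norm (G x) + L * (a * (norm (G x) + norm (g - G x)))"
    using bounded_map_norm_le_split[OF P_bounded a] L by (simp add: mult_left_mono)
  finally show ?thesis by (simp add: mult.assoc)
qed

lemma preconditioned_step_descent:
  fixes f :: "'a::real_inner \<Rightarrow> real"
  assumes deriv: "\<And>x. (f has_derivative (\<lambda>d. G x \<bullet> d)) (at x)"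
    and lip: "\<And>x y. norm (G x - G y) \<le> L * norm (x - y)" and L: "0 \<le> L"
    and a: "0 < a" and aL: "a * L \<le> 1/4" and P: "linear P"
    and P_coercive: "\<And>v. (8/25) * a * (v \<bullet> v) \<le> v \<bullet> P v"
    and P_bounded: "\<And>v. norm (P v) \<le> a * norm v"
  shows "f (x - P g) \<le> f x - (3/100) * a * (norm (G x))\<^sup>2 + 7 * a * (norm (g - G x))\<^sup>2"
proof -
  define X where "X = norm (G x)"
  define Y where "Y = norm (g - G x)"
  have "0 \<le> X" by (simp add: X_def)
  have "L / 2 * (norm (P g))\<^sup>2 \<le> L / 2 * (a * (X + Y))\<^sup>2"
    using bounded_map_norm_le_split[OF P_bounded less_imp_le[OF a], of g "G x"] L
    by (intro mult_left_mono power_mono) (auto simp: X_def Y_def)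
  also have "\<dots> = (a * L) * a / 2 * (X + Y)\<^sup>2" by (simp add: power2_eq_square algebra_simps)
  also have "\<dots> \<le> a / 8 * (X + Y)\<^sup>2"
    using aL a by (intro mult_right_mono) (auto simp: field_simps ac_simps)
  also have "\<dots> \<le> a / 4 * (X\<^sup>2 + Y\<^sup>2)"
    using a sum_squares_bound[of X Y] by (simp add: power2_sum)
  finally have quadratic_term: "L / 2 * (norm (P g))\<^sup>2 \<le> a / 4 * (X\<^sup>2 + Y\<^sup>2)" .
  have "\<bar>G x \<bullet> P (g - G x)\<bar> \<le> X * norm (P (g - G x))" unfolding X_def by (rule Cauchy_Schwarz_ineq2)
  also have "\<dots> \<le> X * (a * Y)"
    using \<open>0 \<le> X\<close> P_bounded by (intro mult_left_mono) (auto simp: Y_def)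
  finally have linear_term: "(8/25) * a * X\<^sup>2 - a * (X * Y) \<le> G x \<bullet> P g"
    using P_coercive[of "G x"]
    by (simp add: X_def linear_diff[OF P] inner_diff_right power2_norm_eq_inner algebra_simps)
  \<comment> \<open>Young's inequality absorbs the cross term with the noise \<open>g - G x\<close>\<close>
  have "X * Y \<le> X\<^sup>2 / 25 + 25 * Y\<^sup>2 / 4"
    using sum_squares_bound[of "X / 5" "5 * Y / 2"] by (simp add: power_divide power_mult_distrib)
  then have cross_term: "a * (X * Y) \<le> a * (X\<^sup>2 / 25 + 25 * Y\<^sup>2 / 4)"
    using a by (simp add: mult_left_mono)
  have "f (x - P g) \<le> f x - G x \<bullet> P g + L / 2 * (norm (P g))\<^sup>2"
    using Lipschitz_gradient_descent_lemma[OF deriv lip, of x "- P g"] by simp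
  also have "\<dots> \<le> f x - (8/25) * a * X\<^sup>2 + a * (X\<^sup>2 / 25 + 25 * Y\<^sup>2 / 4) + a / 4 * (X\<^sup>2 + Y\<^sup>2)"
    using quadratic_term linear_term cross_term by linarith
  also have "\<dots> = f x - (3/100) * a * X\<^sup>2 + (13/2) * a * Y\<^sup>2"
    by (simp add: algebra_simps)
  also have "\<dots> \<le> f x - (3/100) * a * X\<^sup>2 + 7 * a * Y\<^sup>2"
    using a by simp
  finally show ?thesis by (simp add: X_def Y_def)
qed

lemma convergent_of_summable_increments:
  fixes z c :: "nat \<Rightarrow> real"
  assumes z: "\<And>k. 0 \<le> z k" and c: "\<And>k. 0 \<le> c k" "summable c"
    and step: "\<And>k. z (Suc k) \<le> z k + c k"
  shows "convergent z"
proof -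
  define w where "w k = z k - (\<Sum>j<k. c j)" for k
  have "decseq w"
  proof (rule decseq_SucI)
    show "w (Suc k) \<le> w k" for k using step[of k] by (simp add: w_def)
  qed
  moreover have "- suminf c \<le> w k" for k
    using sum_le_suminf[OF c(2), of "{..<k}"] c(1) z[of k] unfolding w_def by auto
  ultimately obtain l where "w \<longlonglongrightarrow> l" by (metis decseq_convergent)
  then have "(\<lambda>k. w k + (\<Sum>j<k. c j)) \<longlonglongrightarrow> l + suminf c"
    by (intro tendsto_add summable_LIMSEQ c)
  then show ?thesis unfolding w_def convergent_def by auto
qed

lemma LIMSEQ_zero_of_summable_weighted:
  fixes z c a :: "nat \<Rightarrow> real"
  assumes z: "\<And>k. 0 \<le> z k" and c: "\<And>k. 0 \<le> c k" "summable c"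
    and step: "\<And>k. z (Suc k) \<le> z k + c k"
    and a: "\<And>k. 0 < a k" "\<not> summable a" and az: "summable (\<lambda>k. a k * z k)"
  shows "z \<longlonglongrightarrow> 0"
proof -
  obtain l where l: "z \<longlonglongrightarrow> l"
    using convergent_of_summable_increments[OF z c step] by (auto simp: convergent_def)
  have "0 \<le> l" using l z by (meson LIMSEQ_le_const)
  moreover have "\<not> 0 < l"
  proof
    assume "0 < l"
    then have "eventually (\<lambda>k. l / 2 < z k) sequentially"
      using l by (intro order_tendstoD) auto
    then have "eventually (\<lambda>k. norm (a k) \<le> (2 / l) * (a k * z k)) sequentially"
    proof (rule eventually_mono)
      fix k assume "l / 2 < z k"
      then have "a k * (l / 2) \<le> a k * z k" using a(1)[of k] by (intro mult_left_mono) auto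
      then show "norm (a k) \<le> (2 / l) * (a k * z k)" using \<open>0 < l\<close> a(1)[of k] by (simp add: field_simps)
    qed
    then have "summable a"
      by (rule summable_comparison_test_ev) (intro summable_mult az)
    with a(2) show False ..
  qed
  ultimately show ?thesis using l by simp
qed

lemma LIMSEQ_zero_of_growth_bound:
  fixes x y a :: "nat \<Rightarrow> real"
  assumes x: "\<And>k. 0 \<le> x k" and y: "\<And>k. 0 \<le> y k" and c: "0 \<le> c"
    and step: "\<And>k. x (Suc k) \<le> x k + c * a k * (x k + y k)"
    and ca: "\<And>k. c * a k \<le> 1/4"
    and a: "\<And>k. 0 < a k" "\<not> summable a"
    and ax: "summable (\<lambda>k. a k * (x k)\<^sup>2)" and ay: "summable (\<lambda>k. a k * (y k)\<^sup>2)"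
  shows "x \<longlonglongrightarrow> 0"
proof -
  have sq_step: "(x (Suc k))\<^sup>2 \<le> (x k)\<^sup>2 + 4 * c * (a k * (x k)\<^sup>2 + a k * (y k)\<^sup>2)" for k
  proof -
    define t where "t = c * a k"
    define s where "s = (x k + y k)\<^sup>2"
    have t: "0 \<le> t" "t \<le> 1/4" using c a(1)[of k] ca[of k] by (auto simp: t_def)
    have "s \<le> 2 * ((x k)\<^sup>2 + (y k)\<^sup>2)"
      using sum_squares_bound[of "x k" "y k"] by (simp add: s_def power2_sum)
    moreover have "t * s \<le> 1/4 * s"
      using t by (intro mult_right_mono) (auto simp: s_def)
    ultimately have "(x k)\<^sup>2 + s - (y k)\<^sup>2 + t * s \<le> 4 * ((x k)\<^sup>2 + (y k)\<^sup>2)"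
      using zero_le_power2[of "x k"] zero_le_power2[of "y k"] by argo
    then have "(x k)\<^sup>2 + t * ((x k)\<^sup>2 + s - (y k)\<^sup>2 + t * s) \<le> (x k)\<^sup>2 + t * (4 * ((x k)\<^sup>2 + (y k)\<^sup>2))"
      using t by (intro add_left_mono mult_left_mono)
    moreover have "(x (Suc k))\<^sup>2 \<le> (x k + t * (x k + y k))\<^sup>2"
      using step[of k] x[of "Suc k"] by (intro power_mono) (auto simp: t_def)
    moreover have "(x k + t * (x k + y k))\<^sup>2 = (x k)\<^sup>2 + t * ((x k)\<^sup>2 + s - (y k)\<^sup>2 + t * s)"
      by (simp add: s_def power2_eq_square algebra_simps)
    ultimately show ?thesis by (simp add: t_def algebra_simps)
  qed
  have "(\<lambda>k. (x k)\<^sup>2) \<longlonglongrightarrow> 0"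
  proof (rule LIMSEQ_zero_of_summable_weighted[where c = "\<lambda>k. 4 * c * (a k * (x k)\<^sup>2 + a k * (y k)\<^sup>2)"])
    show "0 \<le> 4 * c * (a k * (x k)\<^sup>2 + a k * (y k)\<^sup>2)" for k
      using c a(1)[of k] by simp
    show "summable (\<lambda>k. 4 * c * (a k * (x k)\<^sup>2 + a k * (y k)\<^sup>2))"
      by (intro summable_mult summable_add ax ay)
  qed (use a ax sq_step in auto)
  then have "(\<lambda>k. sqrt ((x k)\<^sup>2)) \<longlonglongrightarrow> sqrt 0"
    by (rule tendsto_real_sqrt)
  then show ?thesis
    using x by simp
qed

lemma summable_of_bounded_descent:
  fixes f u v :: "nat \<Rightarrow> real"
  assumes lb: "\<And>k. m \<le> f k" and c: "0 < c" and u: "\<And>k. 0 \<le> u k"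
    and v: "summable v" "\<And>k. 0 \<le> v k"
    and descent: "\<And>k. f (Suc k) \<le> f k - c * u k + v k"
  shows "summable u"
proof (rule summableI_nonneg_bounded[OF u])
  fix n
  have "c * (\<Sum>k<n. u k) \<le> f 0 - f n + (\<Sum>k<n. v k)"
  proof (induction n)
    case (Suc n)
    then show ?case using descent[of n] by (simp add: distrib_left)
  qed simp
  also have "\<dots> \<le> f 0 - m + suminf v"
    using lb[of n] sum_le_suminf[OF v(1), of "{..<n}"] v(2) by auto
  finally show "(\<Sum>k<n. u k) \<le> (f 0 - m + suminf v) / c"
    using c by (simp add: field_simps mult.commute)
qed

lemma preconditioned_gradient_method_LIMSEQ_zero:
  fixes f :: "'a::real_inner \<Rightarrow> real"
  assumes deriv: "\<And>x. (f has_derivative (\<lambda>d. G x \<bullet> d)) (at x)"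
    and lip: "\<And>x y. norm (G x - G y) \<le> L * norm (x - y)" and L: "0 \<le> L"
    and lb: "\<And>x. m \<le> f x"
    and a: "\<And>k. 0 < a k" "\<not> summable a" and aL: "\<And>k. a k * L \<le> 1/4"
    and P: "\<And>k. linear (P k)"
    and P_coercive: "\<And>k v. (8/25) * a k * (v \<bullet> v) \<le> v \<bullet> P k v"
    and P_bounded: "\<And>k v. norm (P k v) \<le> a k * norm v"
    and iter: "\<And>k. x (Suc k) = x k - P k (g k)"
    and noise: "summable (\<lambda>k. a k * (norm (g k - G (x k)))\<^sup>2)"
  shows "(\<lambda>k. G (x k)) \<longlonglongrightarrow> 0"
proof -
  have "summable (\<lambda>k. a k * (norm (G (x k)))\<^sup>2)"
  proof (rule summable_of_bounded_descent[where f = "\<lambda>k. f (x k)" and c = "3/100"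
        and v = "\<lambda>k. 7 * (a k * (norm (g k - G (x k)))\<^sup>2)"])
    show "f (x (Suc k)) \<le> f (x k) - 3/100 * (a k * (norm (G (x k)))\<^sup>2) + 7 * (a k * (norm (g k - G (x k)))\<^sup>2)" for k
      using preconditioned_step_descent[OF deriv lip L a(1)[of k] aL[of k] P[of k] P_coercive[of k]
          P_bounded[of k], of "x k" "g k"]
      by (simp add: iter mult.assoc)
  qed (use lb less_imp_le[OF a(1)] noise in \<open>auto intro: summable_mult\<close>)
  moreover have "norm (G (x (Suc k))) \<le> norm (G (x k)) + L * a k * (norm (G (x k)) + norm (g k - G (x k)))" for k
    using preconditioned_step_gradient_le[OF lip L less_imp_le[OF a(1)[of k]] P_bounded[of k]]
    by (simp add: iter)
  ultimately have "(\<lambda>k. norm (G (x k))) \<longlonglongrightarrow> 0"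
    using L a aL noise
    by (intro LIMSEQ_zero_of_growth_bound[where c = L and a = a and y = "\<lambda>k. norm (g k - G (x k))"])
      (auto simp: mult.commute)
  then show ?thesis by (simp add: tendsto_norm_zero_iff)
qed

lemma integral_le_of_real_cond_exp_le:
  fixes f :: "'w \<Rightarrow> real"
  assumes "prob_space M" and F: "subalgebra M F" and f: "integrable M f"
    and le: "AE w in M. real_cond_exp M F f w \<le> s"
  shows "integral\<^sup>L M f \<le> s"
proof -
  interpret prob_space M by fact
  interpret sigma_finite_subalgebra M F
    by (rule finite_measure_subalgebra_is_sigma_finite) (use F in unfold_locales)
  have "integral\<^sup>L M f = integral\<^sup>L M (real_cond_exp M F f)"
    using real_cond_exp_int(2)[OF f] by simp
  also have "\<dots> \<le> integral\<^sup>L M (\<lambda>w. s)"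
    by (rule integral_mono_AE[OF real_cond_exp_int(1)[OF f] _ le]) simp
  finally show ?thesis by (simp add: prob_space)
qed

lemma AE_summable_of_summable_integral:
  fixes f :: "nat \<Rightarrow> 'w \<Rightarrow> real"
  assumes f: "\<And>k. integrable M (f k)" "\<And>k w. 0 \<le> f k w"
    and sum: "summable (\<lambda>k. integral\<^sup>L M (f k))"
  shows "AE w in M. summable (\<lambda>k. f k w)"
proof -
  have [measurable]: "f k \<in> borel_measurable M" for k
    using f(1) by (rule borel_measurable_integrable)
  have "(\<integral>\<^sup>+ w. (\<Sum>k. ennreal (f k w)) \<partial>M) = (\<Sum>k. \<integral>\<^sup>+ w. ennreal (f k w) \<partial>M)"
    by (rule nn_integral_suminf) measurable
  also have "\<dots> = (\<Sum>k. ennreal (integral\<^sup>L M (f k)))"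
    using f by (simp add: nn_integral_eq_integral)
  also have "\<dots> \<noteq> \<infinity>"
    using sum f by (simp add: ennreal_suminf_neq_top integral_nonneg_AE)
  finally have "AE w in M. (\<Sum>k. ennreal (f k w)) \<noteq> \<infinity>"
    by (intro nn_integral_PInf_AE) measurable
  then show ?thesis
    by eventually_elim (use f(2) in \<open>auto intro: summable_suminf_not_top\<close>)
qed

lemma AE_summable_of_cond_exp_bound:
  fixes f :: "nat \<Rightarrow> 'w \<Rightarrow> real"
  assumes prob: "prob_space M" and F: "\<And>k. subalgebra M (F k)"
    and f: "\<And>k. integrable M (f k)" "\<And>k w. 0 \<le> f k w"
    and bound: "\<And>k. AE w in M. real_cond_exp M (F k) (f k) w \<le> s k"
    and a: "\<And>k. 0 \<le> a k" and sum: "summable (\<lambda>k. a k * s k)"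
  shows "AE w in M. summable (\<lambda>k. a k * f k w)"
proof (rule AE_summable_of_summable_integral)
  have "integral\<^sup>L M (\<lambda>w. a k * f k w) \<le> a k * s k" for k
    using integral_le_of_real_cond_exp_le[OF prob F f(1) bound] a[of k] by (simp add: mult_left_mono)
  then show "summable (\<lambda>k. integral\<^sup>L M (\<lambda>w. a k * f k w))"
    using f a by (intro summable_comparison_test'[OF sum]) (auto intro: integral_nonneg_AE)
qed (use f a in auto)

lemma s2qn_lambda_bounds:
  assumes "0 \<le> v" "0 < a" "0 < r1" "r1 < r2"
  shows "1 / a \<le> s2qn_lambda r1 r2 a v" and "s2qn_lambda r1 r2 a v \<le> 2 / a"
proof -
  define c where "c = (if v < r1 then 2 * r1 / (v + r1) else if v > r2 then 2 * v / (v + r2) else 1)"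
  have "s2qn_lambda r1 r2 a v = c / a" unfolding s2qn_lambda_def c_def by simp
  moreover have "1 \<le> c" "c \<le> 2" unfolding c_def using assms by (auto simp: field_simps)
  ultimately show "1 / a \<le> s2qn_lambda r1 r2 a v" "s2qn_lambda r1 r2 a v \<le> 2 / a"
    using assms by (simp_all add: divide_right_mono)
qed

lemma s2qn_step_size_bounds:
  fixes r1 r2 L h a :: real
  assumes "0 < r1" "r1 < r2" "0 \<le> L" "0 \<le> h" "0 < L + h" "0 \<le> a"
    and "a \<le> r1 / (4 * r2 * (L + h))"
  shows "a * L \<le> 1/4" and "a * h \<le> 1/4"
proof -
  have "a \<le> r1 / (4 * r2 * (L + h))" by fact
  also have "\<dots> \<le> r2 / (4 * r2 * (L + h))"
    using assms by (intro divide_right_mono) auto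
  also have "\<dots> = 1 / (4 * (L + h))"
    using assms by simp
  finally have "a * (L + h) \<le> 1/4"
    using assms by (simp add: field_simps)
  moreover have "0 \<le> a * L" "0 \<le> a * h"
    using assms by simp_all
  ultimately show "a * L \<le> 1/4" "a * h \<le> 1/4"
    by (simp_all add: distrib_left)
qed

theorem theorem1:
  fixes M :: "'w measure"
    and F :: "nat \<Rightarrow> 'w measure"
    and N :: nat
    and psi :: "nat \<Rightarrow> real^'n \<Rightarrow> real"
    and gpsi :: "nat \<Rightarrow> real^'n \<Rightarrow> real^'n"
    and Psi :: "real^'n \<Rightarrow> real"
    and G :: "real^'n \<Rightarrow> real^'n"
    and Psi_inf L h r1 r2 :: real
    and alpha sigma :: "nat \<Rightarrow> real"
    and S :: "nat \<Rightarrow> 'w \<Rightarrow> nat set"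
    and g :: "nat \<Rightarrow> 'w \<Rightarrow> real^'n"
    and g_init :: "'w \<Rightarrow> real^'n"
    and H Lam B :: "nat \<Rightarrow> 'w \<Rightarrow> real^'n^'n"
    and theta :: "nat \<Rightarrow> 'w \<Rightarrow> real^'n"
  assumes prob: "prob_space M"
    and filt_sub: "\<And>k. subalgebra M (F k)"
    and filt_mono: "\<And>k. sets (F k) \<subseteq> sets (F (Suc k))"
    \<comment> \<open>finite-sum structure\<close>
    and N_pos: "N \<ge> 1"
    and psi_deriv: "\<And>i x. i \<in> {1..N} \<Longrightarrow> (psi i has_derivative (\<lambda>d. gpsi i x \<bullet> d)) (at x)"
    and Psi_def: "\<And>x. Psi x = (1 / real N) * (\<Sum>i=1..N. psi i x)"
    \<comment> \<open>assumption (i)\<close>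
    and Psi_deriv: "\<And>x. (Psi has_derivative (\<lambda>d. G x \<bullet> d)) (at x)"
    and G_cont: "continuous_on UNIV G"
    and Psi_lb: "\<And>x. Psi_inf \<le> Psi x"
    and L_ge: "L \<ge> 1"
    and G_lip: "\<And>x y. norm (G x - G y) \<le> L * norm (x - y)"
    \<comment> \<open>algorithm data\<close>
    and r1_pos: "0 < r1" and r12: "r1 < r2"
    and alpha_pos: "\<And>k. 0 < alpha k"
    and S_sub: "\<And>k w. w \<in> space M \<Longrightarrow> S k w \<subseteq> {1..N}"
    and S_ne: "\<And>k w. w \<in> space M \<Longrightarrow> S k w \<noteq> {}"
    and g_def: "\<And>k w. w \<in> space M \<Longrightarrow>
                  g k w = (1 / real (card (S k w))) *\<^sub>R (\<Sum>i\<in>S k w. gpsi i (theta k w))"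
    and B_def: "\<And>k w. w \<in> space M \<Longrightarrow> B k w = H k w + Lam k w"
    and B_sym: "\<And>k w. w \<in> space M \<Longrightarrow> transpose (B k w) = B k w"
    and theta_0: "\<And>w. w \<in> space M \<Longrightarrow>
        theta (Suc 0) w = theta 0 w
          - matrix_inv (B 0 w + mat (s2qn_lambda r1 r2 (alpha 0) (norm (g_init w)))) *v g 0 w"
    and theta_Suc: "\<And>k w. w \<in> space M \<Longrightarrow>
        theta (Suc (Suc k)) w = theta (Suc k) w
          - matrix_inv (B (Suc k) w + mat (s2qn_lambda r1 r2 (alpha (Suc k)) (norm (g k w))))
              *v g (Suc k) w"
    \<comment> \<open>F k plays the role of the paper's F_(k-1)\<close>
    and theta_meas: "\<And>k. theta k \<in> borel_measurable (F k)"
    and g_meas: "\<And>k. g k \<in> borel_measurable M"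
    and B_meas: "\<And>k. B k \<in> borel_measurable M"
    \<comment> \<open>assumption (ii)\<close>
    and indep: "\<And>k. cond_indep M (F k) (B k) (g k)"
    and g_int: "\<And>k i. integrable M (\<lambda>w. g k w $ i)"
    and unbiased: "\<And>k i. AE w in M. real_cond_exp M (F k) (\<lambda>w. g k w $ i) w = G (theta k w) $ i"
    \<comment> \<open>assumption (iii)\<close>
    and var_int: "\<And>k. integrable M (\<lambda>w. (norm (g k w - G (theta k w)))\<^sup>2)"
    and var_bd: "\<And>k. AE w in M.
        real_cond_exp M (F k) (\<lambda>w. (norm (g k w - G (theta k w)))\<^sup>2) w \<le> (sigma k)\<^sup>2"
    \<comment> \<open>assumption (iv)\<close>
    and h_pos: "h > 0"
    and B_bounds: "\<And>k w. w \<in> space M \<Longrightarrow> loewner_le 0 (B k w) \<and> loewner_le (B k w) (mat h)"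
    \<comment> \<open>step-size conditions\<close>
    and alpha_bd: "\<And>k. alpha k \<le> r1 / (4 * r2 * (L + h))"
    and alpha_nonsum: "\<not> summable alpha"
    and alpha_sigma_sum: "summable (\<lambda>k. alpha k * (sigma k)\<^sup>2)"
  shows "AE w in M. (\<lambda>k. G (theta k w)) \<longlonglongrightarrow> 0"
proof -
  have alpha_L: "alpha k * L \<le> 1/4" and alpha_h: "alpha k * h \<le> 1/4" for k
    using s2qn_step_size_bounds[OF r1_pos r12 _ _ _ _ alpha_bd] L_ge h_pos alpha_pos[of k] by simp_all
  have "AE w in M. summable (\<lambda>k. alpha k * (norm (g k w - G (theta k w)))\<^sup>2)"
    using alpha_pos
    by (intro AE_summable_of_cond_exp_bound[OF prob filt_sub var_int _ var_bd _ alpha_sigma_sum])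
      (auto simp: less_imp_le)
  then show ?thesis
  proof (rule AE_mp, intro AE_I2 impI)
    fix w assume w: "w \<in> space M"
      and noise: "summable (\<lambda>k. alpha k * (norm (g k w - G (theta k w)))\<^sup>2)"
    define lam where
      "lam k = s2qn_lambda r1 r2 (alpha k) (if k = 0 then norm (g_init w) else norm (g (k - 1) w))" for k
    define P where "P k = (*v) (matrix_inv (B k w + mat (lam k)))" for k
    have "1 / alpha k \<le> lam k" "lam k \<le> 2 / alpha k" for k
      unfolding lam_def using s2qn_lambda_bounds alpha_pos r1_pos r12 by auto
    note P_bounds = regularized_inverse_bounds[OF B_sym[OF w] conjunct1[OF B_bounds[OF w]]
        conjunct2[OF B_bounds[OF w]] alpha_pos this alpha_h, folded P_def]
    have "theta (Suc k) w = theta k w - P k (g k w)" for k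
      by (cases k) (simp_all add: P_def lam_def theta_0[OF w] theta_Suc[OF w])
    then show "(\<lambda>k. G (theta k w)) \<longlonglongrightarrow> 0"
      by (intro preconditioned_gradient_method_LIMSEQ_zero[OF Psi_deriv G_lip _ Psi_lb alpha_pos
            alpha_nonsum alpha_L _ P_bounds _ noise]) (use L_ge in \<open>simp_all add: P_def matrix_vector_mul_linear\<close>)
  qed
qed

end
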